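(* Let $m$ be a positive integer and $0<\theta<1$. For each positive integer $n$ let $\phi_n$ be the unique root in $(0,1)$ of $\phi^{n+1}+\phi^n-1$, and set $\phi_0=0$. If $\theta\in[\phi_{m-1}^2,\phi_m^2]$ (with $\theta>0$), then $L_m(\theta)\le L_{m'}(\theta)$ for every positive integer $m'$, i.e. $m$ is an optimal coding parameter at precision $\rho/\tau\to0$.
   Context: $\lg$ denotes $\log_2$. For a positive integer $m$ and $0<\theta<1$, the asymptotic (precision $\rho/\tau\to0$) average code length of the modified Rice-Golomb code for Laplace-distributed residuals is $$L_m(\theta)=\begin{cases}1+\lg m+\dfrac{\theta^{m/2}}{1-\theta^{m/2}}, & m=2^\beta \text{ for some integer } \beta\ge0,\\[2mm] 1+\lfloor\lg m\rfloor+\dfrac{\theta^{(2^{\lceil\lg m\rceil}-m)/2}}{1-\theta^{m/2}}, & \text{otherwise.}\end{cases}$$ *)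

theory Defs
  imports "HOL-Analysis.Analysis"
begin

text \<open>Asymptotic average code length of the modified Rice-Golomb code.\<close>
definition Lcode :: "nat \<Rightarrow> real \<Rightarrow> real" where
  "Lcode m \<theta> =
    (if \<exists>\<beta>::nat. m = 2 ^ \<beta>
     then 1 + log 2 (real m) + \<theta> powr (real m / 2) / (1 - \<theta> powr (real m / 2))
     else 1 + real_of_int \<lfloor>log 2 (real m)\<rfloor>
            + \<theta> powr ((2 powr real_of_int \<lceil>log 2 (real m)\<rceil> - real m) / 2)
              / (1 - \<theta> powr (real m / 2)))"

definition phi :: "nat \<Rightarrow> real" where
  "phi n = (if n = 0 then 0
            else (THE x. 0 < x \<and> x < 1 \<and> x ^ (n + 1) + x ^ n - 1 = 0))"

end

theory Submission
  imports Defs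
begin

text \<open>Write \<open>r = sqrt \<theta>\<close>. On each dyadic block \<open>2^k \<le> n < 2^(k+1)\<close> the code length is
  \<open>k + 1 + r^(2^(k+1) - n) / (1 - r^n)\<close>, and in both the inner step and the step across a
  block boundary \<open>L (n+1) - L n\<close> is a positive multiple of \<open>1 - r^n - r^(n+1)\<close>. Since
  \<open>r^n + r^(n+1)\<close> decreases in \<open>n\<close> and equals \<open>1\<close> exactly at \<open>r = \<phi>\<^sub>n\<close>, the hypothesis
  \<open>\<phi>\<^sub>m\<^sub>-\<^sub>1 \<le> r \<le> \<phi>\<^sub>m\<close> makes \<open>L\<close> non-increasing up to \<open>m\<close> and non-decreasing from \<open>m\<close> on.\<close>

lemma powr_half_eq_sqrt_power:
  assumes "0 < (t::real)"
  shows "t powr (real j / 2) = sqrt t ^ j"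
proof -
  have "sqrt t ^ j = (t powr (1/2)) powr real j"
    using assms by (simp add: powr_half_sqrt powr_realpow)
  also have "\<dots> = t powr (real j / 2)" by (simp add: powr_powr)
  finally show ?thesis by simp
qed

lemma Lcode_dyadic_block:
  assumes k: "2^k \<le> n" "n < (2::nat)^(k+1)" and t: "0 < \<theta>"
  shows "Lcode n \<theta> = real k + 1 + sqrt \<theta> ^ (2^(k+1) - n) / (1 - sqrt \<theta> ^ n)"
proof (cases "\<exists>\<beta>::nat. n = 2 ^ \<beta>")
  case True
  then obtain b where b: "n = 2^b" by blast
  with k have "b = k" by (metis Suc_eq_plus1 le_less_Suc_eq nat_power_less_imp_less
      power_increasing_iff one_less_numeral_iff semiring_norm(76) zero_less_numeral)
  with b have "2^(k+1) - n = n" by simp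
  with True b \<open>b = k\<close> show ?thesis
    by (simp add: Lcode_def powr_half_eq_sqrt_power[OF t, symmetric] log_nat_power)
next
  case False
  have "n > 0" using k(1) le_less_trans by fastforce
  have "2^k < n" using k False by (metis le_neq_implies_less)
  have fl: "\<lfloor>log 2 (real n)\<rfloor> = int k"
    using floor_log_nat_eq_powr_iff[of 2 n k] k \<open>n > 0\<close> by simp
  have cl: "\<lceil>log 2 (real n)\<rceil> = int k + 1"
    using ceiling_log_nat_eq_powr_iff[of 2 n k] \<open>2^k < n\<close> k \<open>n > 0\<close> by simp
  have exponent: "(2 powr real_of_int (int k + 1) - real n) / 2 = real (2^(k+1) - n) / 2"
    using k by (simp add: of_nat_diff powr_add powr_realpow)
  show ?thesis using False
    unfolding Lcode_def fl cl exponent by (simp add: powr_half_eq_sqrt_power[OF t])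
qed

lemma Lcode_Suc_diff:
  assumes n: "1 \<le> n" and t: "0 < \<theta>" "\<theta> < 1"
  obtains P where "0 < P"
    "Lcode (Suc n) \<theta> - Lcode n \<theta> = P * (1 - sqrt \<theta> ^ n - sqrt \<theta> ^ Suc n)"
proof -
  define r where "r = sqrt \<theta>"
  have r: "0 < r" "r < 1" using t by (auto simp: r_def)
  have rn: "r ^ n < 1" "r ^ Suc n < 1" using r n by (simp_all only: power_less_one_iff) auto
  obtain k where k: "2^k \<le> n" "n < (2::nat)^(k+1)" using ex_power_ivl1[of 2 n] n by auto
  let ?D = "(1 - r ^ n) * (1 - r ^ Suc n)"
  have "\<exists>c. Lcode (Suc n) \<theta> - Lcode n \<theta> = r ^ c * (1 - r) / ?D * (1 - r ^ n - r ^ Suc n)"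
  proof (cases "Suc n < 2^(k+1)")
    case True
    define c where "c = 2^(k+1) - Suc n"
    have "2^k \<le> Suc n" using k by simp
    from Lcode_dyadic_block[OF this True t(1)] Lcode_dyadic_block[OF k t(1)] True
    have "Lcode (Suc n) \<theta> - Lcode n \<theta> = r ^ c / (1 - r ^ Suc n) - r ^ Suc c / (1 - r ^ n)"
      by (simp add: r_def c_def Suc_diff_Suc)
    also have "\<dots> = r ^ c * (1 - r) / ?D * (1 - r ^ n - r ^ Suc n)"
      using rn by (simp add: field_simps)
    finally show ?thesis by blast
  next
    case False
    with k have boundary: "Suc n = 2^(k+1)" by simp
    then have "2^(k+1) \<le> Suc n" "Suc n < (2::nat)^(k+1+1)" by auto
    moreover have "2^(k+1+1) - Suc n = Suc n" "2^(k+1) - n = 1" using boundary by auto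
    ultimately have "Lcode (Suc n) \<theta> - Lcode n \<theta> = 1 + r ^ Suc n / (1 - r ^ Suc n) - r / (1 - r ^ n)"
      using Lcode_dyadic_block[of "k+1" "Suc n" \<theta>] Lcode_dyadic_block[OF k t(1)] t(1)
      by (simp add: r_def)
    also have "\<dots> = r ^ 0 * (1 - r) / ?D * (1 - r ^ n - r ^ Suc n)"
      using rn by (simp add: field_simps)
    finally show ?thesis by blast
  qed
  then obtain c where "Lcode (Suc n) \<theta> - Lcode n \<theta> = r ^ c * (1 - r) / ?D * (1 - r ^ n - r ^ Suc n)"
    by blast
  moreover have "0 < r ^ c * (1 - r) / ?D" using r rn by simp
  ultimately show ?thesis using that by (simp add: r_def)
qed

lemma Lcode_le_Lcode_Suc:
  assumes "1 \<le> n" "0 < \<theta>" "\<theta> < 1" "sqrt \<theta> ^ n + sqrt \<theta> ^ Suc n \<le> 1"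
  shows "Lcode n \<theta> \<le> Lcode (Suc n) \<theta>"
proof -
  obtain P where "0 < P" "Lcode (Suc n) \<theta> - Lcode n \<theta> = P * (1 - sqrt \<theta> ^ n - sqrt \<theta> ^ Suc n)"
    using Lcode_Suc_diff assms(1-3) by blast
  moreover have "0 \<le> P * (1 - sqrt \<theta> ^ n - sqrt \<theta> ^ Suc n)"
    using \<open>0 < P\<close> assms(4) by simp
  ultimately show ?thesis by linarith
qed

lemma Lcode_Suc_le_Lcode:
  assumes "1 \<le> n" "0 < \<theta>" "\<theta> < 1" "1 \<le> sqrt \<theta> ^ n + sqrt \<theta> ^ Suc n"
  shows "Lcode (Suc n) \<theta> \<le> Lcode n \<theta>"
proof -
  obtain P where "0 < P" "Lcode (Suc n) \<theta> - Lcode n \<theta> = P * (1 - sqrt \<theta> ^ n - sqrt \<theta> ^ Suc n)"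
    using Lcode_Suc_diff assms(1-3) by blast
  moreover have "P * (1 - sqrt \<theta> ^ n - sqrt \<theta> ^ Suc n) \<le> 0"
    using \<open>0 < P\<close> assms(4) by (simp add: mult_nonneg_nonpos del: power_Suc)
  ultimately show ?thesis by linarith
qed

lemma phi_root:
  assumes "1 \<le> n"
  shows "0 < phi n" "phi n < 1" "phi n ^ n + phi n ^ Suc n = 1"
proof -
  let ?root = "\<lambda>x::real. 0 < x \<and> x < 1 \<and> x ^ (n + 1) + x ^ n - 1 = 0"
  have "\<exists>x\<ge>(0::real). x \<le> 1 \<and> x ^ (n + 1) + x ^ n - 1 = 0"
    by (rule IVT[of "\<lambda>x. x ^ (n + 1) + x ^ n - 1"])
      (use assms in \<open>auto simp: power_0_left intro!: continuous_intros\<close>)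
  then obtain x :: real where x01: "0 \<le> x" "x \<le> 1" and fx: "x ^ (n + 1) + x ^ n - 1 = 0"
    by blast
  have "x \<noteq> 0" using fx assms by (auto simp: power_0_left)
  moreover have "x \<noteq> 1" using fx by auto
  ultimately have x: "?root x" using x01 fx by simp
  have unique: "y = x" if "?root y" for y
  proof (rule linorder_cases[of y x])
    assume "y < x"
    with that assms have "y ^ (n + 1) < x ^ (n + 1)" "y ^ n < x ^ n"
      by (auto intro!: power_strict_mono simp del: power_Suc)
    with that x show ?thesis by linarith
  next
    assume "x < y"
    with x assms have "x ^ (n + 1) < y ^ (n + 1)" "x ^ n < y ^ n"
      by (auto intro!: power_strict_mono simp del: power_Suc)
    with that x show ?thesis by linarith
  qed
  have "phi n = x" unfolding phi_def using assms the_equality[of ?root, OF x unique] by simp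
  with x show "0 < phi n" "phi n < 1" "phi n ^ n + phi n ^ Suc n = 1" by auto
qed

lemma power_add_power_Suc_le:
  fixes x y :: "'a::linordered_semidom"
  assumes "0 \<le> x" "x \<le> y" "y \<le> 1" "i \<le> j"
  shows "x ^ j + x ^ Suc j \<le> y ^ i + y ^ Suc i"
proof -
  have "x ^ j \<le> x ^ i" "x ^ Suc j \<le> x ^ Suc i"
    using assms by (auto intro!: power_decreasing simp del: power_Suc)
  moreover have "x ^ i \<le> y ^ i" "x ^ Suc i \<le> y ^ Suc i"
    using assms by (auto intro!: power_mono simp del: power_Suc)
  ultimately show ?thesis by (meson add_mono order_trans)
qed

lemma le_at_valley:
  fixes f :: "nat \<Rightarrow> 'a::order"
  assumes "a \<le> m" "a \<le> n"
    and antimono_below: "\<And>i. a \<le> i \<Longrightarrow> i < m \<Longrightarrow> f (Suc i) \<le> f i"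
    and mono_above: "\<And>i. m \<le> i \<Longrightarrow> f i \<le> f (Suc i)"
  shows "f m \<le> f n"
proof (cases "m \<le> n")
  case True
  then show ?thesis
    by (induction n rule: dec_induct) (auto intro: order_trans mono_above)
next
  case False
  then have "n \<le> m" by simp
  then show ?thesis
    by (induction m rule: dec_induct) (use \<open>a \<le> n\<close> in \<open>auto intro: order_trans antimono_below\<close>)
qed

theorem theorem3:
  fixes m :: nat and \<theta> :: real
  assumes "m \<ge> 1" and "0 < \<theta>" and "\<theta> < 1"
    and "(phi (m - 1))\<^sup>2 \<le> \<theta>" and "\<theta> \<le> (phi m)\<^sup>2"
  shows "\<forall>m'::nat. m' \<ge> 1 \<longrightarrow> Lcode m \<theta> \<le> Lcode m' \<theta>"
proof (intro allI impI)
  fix m' :: nat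
  assume "m' \<ge> 1"
  have r: "0 \<le> sqrt \<theta>" "sqrt \<theta> \<le> 1" using assms(2,3) by auto
  show "Lcode m \<theta> \<le> Lcode m' \<theta>"
  proof (rule le_at_valley[where a = 1 and f = "\<lambda>n. Lcode n \<theta>"])
    fix i
    assume i: "1 \<le> i" "i < m"
    then have "1 \<le> m - 1" by simp
    note phi = phi_root[OF this]
    have "phi (m - 1) \<le> sqrt \<theta>"
      using assms(4) phi(1) by (simp add: real_le_rsqrt)
    then have "1 \<le> sqrt \<theta> ^ i + sqrt \<theta> ^ Suc i"
      using power_add_power_Suc_le[of "phi (m - 1)" "sqrt \<theta>" i "m - 1"] phi r i by simp
    with i assms show "Lcode (Suc i) \<theta> \<le> Lcode i \<theta>" by (intro Lcode_Suc_le_Lcode) auto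
  next
    fix i
    assume i: "m \<le> i"
    note phi = phi_root[OF assms(1)]
    have "sqrt \<theta> \<le> phi m"
      using assms(5) phi(1) by (simp add: real_le_lsqrt)
    then have "sqrt \<theta> ^ i + sqrt \<theta> ^ Suc i \<le> 1"
      using power_add_power_Suc_le[of "sqrt \<theta>" "phi m" m i] phi r i by simp
    with i assms show "Lcode i \<theta> \<le> Lcode (Suc i) \<theta>" by (intro Lcode_le_Lcode_Suc) auto
  qed (use assms(1) \<open>m' \<ge> 1\<close> in auto)
qed

end
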